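(* Let $\boldsymbol{A}$ be the adjacency matrix of an undirected graph without self-loops on a finite vertex set $\boldsymbol{V}=\{1,\dots,N\}$. Let $\mathcal{R}_e\subset\boldsymbol{V}$ be a nonempty set of egos and $\mathcal{R}_a\subset\boldsymbol{V}\setminus\mathcal{R}_e$ a nonempty set of alters, $n_a=|\mathcal{R}_a|$, each alter $j$ having a unique recruiting ego $e(j)\in\mathcal{R}_e$ with $A_{j\,e(j)}=1$. Let $\widetilde{\boldsymbol{A}}$ have $\widetilde A_{ij}=\widetilde A_{ji}=1$ iff $i\in\mathcal{R}_a$ and $j=e(i)$ (other entries $0$). Let $\boldsymbol{Z}\in\{0,1\}^N$ have independent components with $\Pr(Z_i=1)=p_z\,\mathbb{I}\{i\in\mathcal{R}_e\}$, $p_z\in(0,1)$. Define $F_i=\mathbb{I}\{\sum_{j\neq i}Z_jA_{ij}>0\}$, $\widetilde F_i=\mathbb{I}\{\sum_{j\neq i}Z_j\widetilde A_{ij}>0\}$. Alters $i\in\mathcal{R}_a$ have fixed real potential outcomes $Y_i(0,f)$, $f\in\{0,1\}$, and observed outcome $Y_i=Y_i(0,F_i)$. Let $$IE=\frac1{n_a}\sum_{i\in\mathcal{R}_a}[Y_i(0,1)-Y_i(0,0)],\qquad \widehat{IE}=\frac1{n_a}\sum_{i\in\mathcal{R}_a}\Big[\frac{\mathbb{I}\{\widetilde F_i=1\}Y_i}{p_z}-\frac{\mathbb{I}\{\widetilde F_i=0\}Y_i}{1-p_z}\Big].$$ If $Y_i(0,1)\ge Y_i(0,0)$ for all $i\in\mathcal{R}_a$,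 then $0\le\mathbb{E}_{\boldsymbol{Z}}[\widehat{IE}]\le IE$; if $Y_i(0,1)\le Y_i(0,0)$ for all $i\in\mathcal{R}_a$, then $IE\le\mathbb{E}_{\boldsymbol{Z}}[\widehat{IE}]\le0$.
   Context: Design-based setting: everything except the treatment assignment $\boldsymbol{Z}$ is fixed, and expectations are over $\boldsymbol{Z}$. *)

theory Defs
  imports "HOL-Probability.Probability"
begin

definition Atil :: "nat set \<Rightarrow> (nat \<Rightarrow> nat) \<Rightarrow> nat \<Rightarrow> nat \<Rightarrow> real" where
  "Atil Ralt e i j = (if (i \<in> Ralt \<and> j = e i) \<or> (j \<in> Ralt \<and> i = e j) then 1 else 0)"

definition expo :: "nat set \<Rightarrow> (nat \<Rightarrow> nat \<Rightarrow> real) \<Rightarrow> (nat \<Rightarrow> bool) \<Rightarrow> nat \<Rightarrow> bool" where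
  "expo V A z i = ((\<Sum>j\<in>V - {i}. of_bool (z j) * A i j) > 0)"

definition Zdist :: "nat set \<Rightarrow> nat set \<Rightarrow> real \<Rightarrow> (nat \<Rightarrow> bool) pmf" where
  "Zdist V Rego pz = Pi_pmf V False (\<lambda>i. bernoulli_pmf (if i \<in> Rego then pz else 0))"

definition IE :: "nat set \<Rightarrow> (nat \<Rightarrow> bool \<Rightarrow> real) \<Rightarrow> real" where
  "IE Ralt Y = (1 / real (card Ralt)) * (\<Sum>i\<in>Ralt. Y i True - Y i False)"

definition IEhat :: "nat set \<Rightarrow> (nat \<Rightarrow> nat \<Rightarrow> real) \<Rightarrow> nat set \<Rightarrow> (nat \<Rightarrow> nat)
    \<Rightarrow> real \<Rightarrow> (nat \<Rightarrow> bool \<Rightarrow> real) \<Rightarrow> (nat \<Rightarrow> bool) \<Rightarrow> real" where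
  "IEhat V A Ralt e pz Y z = (1 / real (card Ralt)) *
     (\<Sum>i\<in>Ralt. of_bool (expo V (Atil Ralt e) z i) * Y i (expo V A z i) / pz
             - of_bool (\<not> expo V (Atil Ralt e) z i) * Y i (expo V A z i) / (1 - pz))"

end

(*
  The estimated exposure of an alter i is the treatment Z_e(i) of its recruiting ego, an
  independent Bernoulli(p_z) coordinate. Conditioning on it, the treated arm of the estimator
  always meets the true exposure F_i = 1 (i is adjacent to e(i)) and contributes Y_i(0,1), while
  the control arm contributes E[Y_i(0,F_i) | Z_e(i) = 0] = Y_i(0,0) + q_i (Y_i(0,1) - Y_i(0,0)),
  where q_i is the probability that i is exposed through some other treated neighbour. So each
  alter contributes (1 - q_i) times its individual effect, and an average of effects of a
  common sign, shrunk by weights in [0,1], lies between 0 and the unshrunk average IE.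
*)
theory Submission
  imports Defs
begin

lemma finite_set_Pi_pmf:
  fixes p :: "'a \<Rightarrow> 'b::finite pmf"
  assumes "finite A"
  shows "finite (set_pmf (Pi_pmf A dflt p))"
  using assms by (auto simp: set_Pi_pmf)

lemma expectation_pair_pmf_finite:
  fixes h :: "'a \<times> 'b \<Rightarrow> real"
  assumes finA: "finite (set_pmf A)" and finB: "finite (set_pmf B)"
  shows "measure_pmf.expectation (pair_pmf A B) h
       = measure_pmf.expectation A (\<lambda>a. measure_pmf.expectation B (\<lambda>b. h (a, b)))"
proof -
  have "measure_pmf.expectation (pair_pmf A B) h
      = (\<Sum>(a, b)\<in>set_pmf A \<times> set_pmf B. h (a, b) * pmf (pair_pmf A B) (a, b))"
    using assms by (subst integral_measure_pmf_real[of "set_pmf A \<times> set_pmf B"])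
      (auto simp: case_prod_beta)
  also have "\<dots> = (\<Sum>a\<in>set_pmf A. (\<Sum>b\<in>set_pmf B. h (a, b) * pmf B b) * pmf A a)"
    by (subst sum.cartesian_product[symmetric])
       (simp add: pmf_pair sum_distrib_left sum_distrib_right mult_ac)
  also have "\<dots> = measure_pmf.expectation A (\<lambda>a. measure_pmf.expectation B (\<lambda>b. h (a, b)))"
    using assms
    by (simp add: integral_measure_pmf_real[of "set_pmf A"] integral_measure_pmf_real[of "set_pmf B"])
  finally show ?thesis .
qed

lemma expectation_Pi_pmf_condition_bernoulli:
  fixes h :: "('a \<Rightarrow> bool) \<Rightarrow> real"
  assumes V: "finite V" "x \<in> V" and px: "p x = bernoulli_pmf q" and q: "0 \<le> q" "q \<le> 1"
  defines "B \<equiv> Pi_pmf (V - {x}) False p"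
  shows "measure_pmf.expectation (Pi_pmf V False p) h
       = q * measure_pmf.expectation B (\<lambda>f. h (f(x := True)))
         + (1 - q) * measure_pmf.expectation B (\<lambda>f. h (f(x := False)))"
proof -
  have "Pi_pmf V False p = map_pmf (\<lambda>(y, f). f(x := y)) (pair_pmf (bernoulli_pmf q) B)"
    using V Pi_pmf_insert[of "V - {x}" x False p] by (simp add: B_def px insert_absorb)
  then have "measure_pmf.expectation (Pi_pmf V False p) h
      = measure_pmf.expectation (pair_pmf (bernoulli_pmf q) B) (\<lambda>(y, f). h (f(x := y)))"
    by (simp add: case_prod_unfold)
  also have "\<dots> = measure_pmf.expectation (bernoulli_pmf q)
                    (\<lambda>y. measure_pmf.expectation B (\<lambda>f. h (f(x := y))))"
    using V expectation_pair_pmf_finite[of "bernoulli_pmf q" B "\<lambda>(y, f). h (f(x := y))"]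
    by (simp add: B_def finite_set_Pi_pmf)
  finally show ?thesis
    using q by (simp add: mult.commute)
qed

lemma expectation_ipw_contrast_shrinks:
  fixes Y :: "bool \<Rightarrow> real" and F :: "('a \<Rightarrow> bool) \<Rightarrow> bool"
  assumes V: "finite V" "x \<in> V" and px: "p x = bernoulli_pmf q" and q: "0 < q" "q < 1"
    and F_treated: "\<And>z. z x \<Longrightarrow> F z"
  shows "\<exists>t. 0 \<le> t \<and> t \<le> 1 \<and>
    measure_pmf.expectation (Pi_pmf V False p)
      (\<lambda>z. of_bool (z x) * Y (F z) / q - of_bool (\<not> z x) * Y (F z) / (1 - q))
    = t * (Y True - Y False)"
proof -
  define est where
    "est = (\<lambda>z. of_bool (z x) * Y (F z) / q - of_bool (\<not> z x) * Y (F z) / (1 - q))"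
  define B where "B = Pi_pmf (V - {x}) False p"
  define r where "r = measure_pmf.expectation B (\<lambda>f. of_bool (F f) :: real)"
  have finB: "finite (set_pmf B)"
    using V by (simp add: B_def finite_set_Pi_pmf)
  have untreated: "f(x := False) = f" if "f \<in> set_pmf B" for f
    using that set_Pi_pmf_subset[of "V - {x}" False p] V by (force simp: B_def fun_upd_idem_iff)
  have Y_F: "Y (F f) = Y False + of_bool (F f) * (Y True - Y False)" for f
    by (cases "F f") simp_all
  have "measure_pmf.expectation B (\<lambda>f. est (f(x := False)))
      = measure_pmf.expectation B (\<lambda>f. - (Y False + of_bool (F f) * (Y True - Y False)) / (1 - q))"
    by (intro integral_cong_AE) (auto intro!: AE_pmfI simp: est_def untreated Y_F[symmetric])
  also have "\<dots> = - (Y False + r * (Y True - Y False)) / (1 - q)"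
    by (simp add: r_def integrable_measure_pmf_finite[OF finB])
  finally have control_arm: "measure_pmf.expectation B (\<lambda>f. est (f(x := False)))
      = - (Y False + r * (Y True - Y False)) / (1 - q)" .
  have r_bounds: "0 \<le> r" "r \<le> 1"
    unfolding r_def
    by (auto intro!: integral_nonneg_AE measure_pmf.integral_le_const
        integrable_measure_pmf_finite[OF finB])
  have "measure_pmf.expectation (Pi_pmf V False p) est = (1 - r) * (Y True - Y False)"
    using V px q expectation_Pi_pmf_condition_bernoulli[of V x p q est]
    by (simp add: B_def[symmetric] control_arm) (simp add: est_def F_treated field_simps)
  with r_bounds show ?thesis
    unfolding est_def by (intro exI[of _ "1 - r"]) simp
qed

lemma sum_unit_weights_between:
  fixes t d :: "'a \<Rightarrow> real"
  assumes t: "\<forall>i\<in>I. 0 \<le> t i \<and> t i \<le> 1"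
  shows "\<forall>i\<in>I. 0 \<le> d i \<Longrightarrow> 0 \<le> (\<Sum>i\<in>I. t i * d i) \<and> (\<Sum>i\<in>I. t i * d i) \<le> sum d I"
    and "\<forall>i\<in>I. d i \<le> 0 \<Longrightarrow> sum d I \<le> (\<Sum>i\<in>I. t i * d i) \<and> (\<Sum>i\<in>I. t i * d i) \<le> 0"
  using t by (auto intro!: sum_nonneg sum_nonpos sum_mono mult_left_le_one_le mult_nonneg_nonpos
      simp: mult_le_cancel_right1)

lemma expo_Atil_alter:
  assumes "finite V" "i \<in> Ralt" "i \<notin> Rego" "e i \<in> V" "\<forall>j\<in>Ralt. e j \<in> Rego"
  shows "expo V (Atil Ralt e) z i = z (e i)"
proof -
  have "e i \<noteq> i"
    using assms by auto
  then have "(\<Sum>j\<in>V - {i}. of_bool (z j) * Atil Ralt e i j)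
      = (\<Sum>j\<in>V - {i}. if j = e i then of_bool (z (e i)) else 0)"
    using assms by (intro sum.cong) (auto simp: Atil_def)
  also have "\<dots> = of_bool (z (e i))"
    using assms \<open>e i \<noteq> i\<close> by (simp add: sum.delta')
  finally show ?thesis
    by (simp add: expo_def)
qed

lemma expo_if_treated_neighbour:
  assumes "finite V" "j \<in> V - {i}" "z j" "A i j = 1" "\<forall>k\<in>V. 0 \<le> A i k"
  shows "expo V A z i"
proof -
  have "(1::real) = of_bool (z j) * A i j"
    using assms by simp
  also have "\<dots> \<le> (\<Sum>k\<in>V - {i}. of_bool (z k) * A i k)"
    using assms by (intro member_le_sum) auto
  finally show ?thesis
    by (simp add: expo_def)
qed

lemma expectation_IEhat_shrinks_effects:
  fixes A :: "nat \<Rightarrow> nat \<Rightarrow> real" and Y :: "nat \<Rightarrow> bool \<Rightarrow> real"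
  assumes V: "finite V" and Re_sub: "Rego \<subseteq> V" and Ra_sub: "Ralt \<subseteq> V - Rego"
    and e_ego: "\<forall>j\<in>Ralt. e j \<in> Rego" and e_adj: "\<forall>j\<in>Ralt. A j (e j) = 1"
    and A_nonneg: "\<forall>i\<in>Ralt. \<forall>j\<in>V. 0 \<le> A i j" and pz: "0 < pz" "pz < 1"
  shows "\<exists>t. (\<forall>i\<in>Ralt. 0 \<le> t i \<and> t i \<le> 1) \<and>
    measure_pmf.expectation (Zdist V Rego pz) (IEhat V A Ralt e pz Y)
      = 1 / real (card Ralt) * (\<Sum>i\<in>Ralt. t i * (Y i True - Y i False))"
proof -
  define summand where "summand = (\<lambda>i z.
    of_bool (expo V (Atil Ralt e) z i) * Y i (expo V A z i) / pz
      - of_bool (\<not> expo V (Atil Ralt e) z i) * Y i (expo V A z i) / (1 - pz))"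
  have "\<exists>t. 0 \<le> t \<and> t \<le> 1 \<and>
      measure_pmf.expectation (Zdist V Rego pz) (summand i) = t * (Y i True - Y i False)"
    if i: "i \<in> Ralt" for i
  proof -
    have ego: "e i \<in> V" "e i \<in> Rego" "e i \<noteq> i" "i \<notin> Rego"
      using i e_ego Re_sub Ra_sub by force+
    have summand_i: "summand i = (\<lambda>z. of_bool (z (e i)) * Y i (expo V A z i) / pz
        - of_bool (\<not> z (e i)) * Y i (expo V A z i) / (1 - pz))"
      using V i ego e_ego by (simp add: summand_def expo_Atil_alter)
    have exposed: "expo V A z i" if "z (e i)" for z
      using V i ego that e_adj A_nonneg by (intro expo_if_treated_neighbour) auto
    show ?thesis
      unfolding Zdist_def summand_i
      by (rule expectation_ipw_contrast_shrinks) (use V ego pz exposed in auto)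
  qed
  then obtain t where t: "\<And>i. i \<in> Ralt \<Longrightarrow> 0 \<le> t i \<and> t i \<le> 1 \<and>
      measure_pmf.expectation (Zdist V Rego pz) (summand i) = t i * (Y i True - Y i False)"
    by metis
  have "finite (set_pmf (Zdist V Rego pz))"
    using V by (simp add: Zdist_def finite_set_Pi_pmf)
  moreover have "IEhat V A Ralt e pz Y = (\<lambda>z. 1 / real (card Ralt) * (\<Sum>i\<in>Ralt. summand i z))"
    by (simp add: fun_eq_iff IEhat_def summand_def)
  ultimately have "measure_pmf.expectation (Zdist V Rego pz) (IEhat V A Ralt e pz Y)
      = 1 / real (card Ralt) * (\<Sum>i\<in>Ralt. measure_pmf.expectation (Zdist V Rego pz) (summand i))"
    by (simp add: integrable_measure_pmf_finite)
  also have "\<dots> = 1 / real (card Ralt) * (\<Sum>i\<in>Ralt. t i * (Y i True - Y i False))"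
    using t by simp
  finally show ?thesis
    using t by blast
qed

theorem mainTheorem4:
  fixes N :: nat and A :: "nat \<Rightarrow> nat \<Rightarrow> real"
    and Rego Ralt :: "nat set" and e :: "nat \<Rightarrow> nat"
    and pz :: real and Y :: "nat \<Rightarrow> bool \<Rightarrow> real"
  assumes A01: "\<forall>i\<in>{1..N}. \<forall>j\<in>{1..N}. A i j \<in> {0, 1}"
    and Asym: "\<forall>i\<in>{1..N}. \<forall>j\<in>{1..N}. A i j = A j i"
    and Anoloop: "\<forall>i\<in>{1..N}. A i i = 0"
    and Re_sub: "Rego \<subseteq> {1..N}" and Re_ne: "Rego \<noteq> {}"
    and Ra_sub: "Ralt \<subseteq> {1..N} - Rego" and Ra_ne: "Ralt \<noteq> {}"
    and e_ego: "\<forall>j\<in>Ralt. e j \<in> Rego"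
    and e_adj: "\<forall>j\<in>Ralt. A j (e j) = 1"
    and pz: "0 < pz" "pz < 1"
  shows "((\<forall>i\<in>Ralt. Y i True \<ge> Y i False) \<longrightarrow>
            0 \<le> measure_pmf.expectation (Zdist {1..N} Rego pz) (IEhat {1..N} A Ralt e pz Y)
          \<and> measure_pmf.expectation (Zdist {1..N} Rego pz) (IEhat {1..N} A Ralt e pz Y) \<le> IE Ralt Y)
       \<and> ((\<forall>i\<in>Ralt. Y i True \<le> Y i False) \<longrightarrow>
            IE Ralt Y \<le> measure_pmf.expectation (Zdist {1..N} Rego pz) (IEhat {1..N} A Ralt e pz Y)
          \<and> measure_pmf.expectation (Zdist {1..N} Rego pz) (IEhat {1..N} A Ralt e pz Y) \<le> 0)"
proof -
  have A_nonneg: "\<forall>i\<in>Ralt. \<forall>j\<in>{1..N}. 0 \<le> A i j"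
    using A01 Ra_sub by fastforce
  obtain t where t: "\<forall>i\<in>Ralt. 0 \<le> t i \<and> t i \<le> 1"
    and E: "measure_pmf.expectation (Zdist {1..N} Rego pz) (IEhat {1..N} A Ralt e pz Y)
      = 1 / real (card Ralt) * (\<Sum>i\<in>Ralt. t i * (Y i True - Y i False))"
    using expectation_IEhat_shrinks_effects[OF _ Re_sub Ra_sub e_ego e_adj A_nonneg pz] by blast
  note bounds = sum_unit_weights_between[OF t, of "\<lambda>i. Y i True - Y i False"]
  show ?thesis
    unfolding E IE_def
  proof (intro conjI impI)
    assume "\<forall>i\<in>Ralt. Y i False \<le> Y i True"
    then show "0 \<le> 1 / real (card Ralt) * (\<Sum>i\<in>Ralt. t i * (Y i True - Y i False))"
      and "1 / real (card Ralt) * (\<Sum>i\<in>Ralt. t i * (Y i True - Y i False))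
        \<le> 1 / real (card Ralt) * (\<Sum>i\<in>Ralt. Y i True - Y i False)"
      using bounds(1) by (simp_all add: divide_right_mono)
  next
    assume "\<forall>i\<in>Ralt. Y i True \<le> Y i False"
    then show "1 / real (card Ralt) * (\<Sum>i\<in>Ralt. Y i True - Y i False)
        \<le> 1 / real (card Ralt) * (\<Sum>i\<in>Ralt. t i * (Y i True - Y i False))"
      and "1 / real (card Ralt) * (\<Sum>i\<in>Ralt. t i * (Y i True - Y i False)) \<le> 0"
      using bounds(2) by (simp_all add: divide_right_mono divide_nonpos_nonneg)
  qed
qed

end
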